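(* Let $a\in\mathbb{R}$, $q,r>0$ and let $\kappa\ge1$ be an integer. For $k_1\in\mathbb{R}^{\kappa\times 1}$ and $k_2\in\mathbb{R}^{1\times\kappa}$ write $\mathbf{k}:=k_2k_1\in\mathbb{R}$, let $\mathcal{K}:=\{(k_1,k_2): a-\mathbf{k}<0\}$, define $\mathcal{L}(k_1,k_2):=-\frac{q+r\mathbf{k}^2}{2(a-\mathbf{k})}$ on $\mathcal{K}$, and $\underline{\mathcal{L}}:=\inf_{\mathcal{K}}\mathcal{L}$. For $\gamma>0$ let $\mathcal{K}_\gamma:=\{(k_1,k_2)\in\mathcal{K}: \|k_1+k_2^\top\|^2\ge\gamma\}$. Then for every $\gamma>\max(0,4a)$ the constant $$\underline{\mu}:=\frac{r}{4}\min\left\{1,\sqrt{\frac{\gamma^2}{(\gamma-4a)^2}}\right\}$$ is positive and $$\|\nabla\mathcal{L}(k_1,k_2)\|\ \ge\ \sqrt{\underline{\mu}\,(\mathcal{L}(k_1,k_2)-\underline{\mathcal{L}})}\qquad\text{for all }(k_1,k_2)\in\mathcal{K}_\gamma.$$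
   Context: $\mathcal{L}$ is the LQR cost $\mathbb{E}_{x_0\sim\mathcal{N}(0,1)}\int_0^\infty(qx^2+ru^2)dt$ of $\dot x=ax+u$, $u=-k_2k_1x$, overparameterized through the factorization $\mathbf{k}=k_2k_1$. The gradient $\nabla\mathcal{L}$ is with respect to all entries of $(k_1,k_2)$. *)

theory Defs
  imports "HOL-Analysis.Analysis"
begin

text \<open>A column vector k1 and a row vector k2 in
  R^kappa are both represented as elements of real^'n (the transpose of k2 has the
  same coordinates); the product k2 k1 is the inner product.\<close>

definition lqr_cost :: "real \<Rightarrow> real \<Rightarrow> real \<Rightarrow> ((real^'n) \<times> (real^'n)) \<Rightarrow> real" where
  "lqr_cost a q r = (\<lambda>(k1, k2). - (q + r * (k2 \<bullet> k1)\<^sup>2) / (2 * (a - k2 \<bullet> k1)))"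

definition stab_set :: "real \<Rightarrow> ((real^'n) \<times> (real^'n)) set" where
  "stab_set a = {(k1, k2). a - k2 \<bullet> k1 < 0}"

text \<open>Gradient w.r.t. all entries of (k1,k2): the Riesz representative of the
  Frechet derivative on the Euclidean product space.\<close>

definition grad :: "('a::real_inner \<Rightarrow> real) \<Rightarrow> 'a \<Rightarrow> 'a" where
  "grad f x = (THE g. (f has_derivative (\<lambda>h. g \<bullet> h)) (at x))"

end

theory Submission imports Defs begin

text \<open>The cost depends on \<open>(k\<^sub>1, k\<^sub>2)\<close> only through \<open>k = k\<^sub>2 k\<^sub>1\<close>, via the scalar cost
  \<open>\<ell>(k) = (q + r k\<^sup>2) / (2 (k - a))\<close>. Completing the square around the optimal gain
  \<open>k\<^sup>* = a + \<surd>(a\<^sup>2 + q/r)\<close>, the root of the Riccati equation \<open>r k\<^sup>* (k\<^sup>* - 2a) = q\<close>, gives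
  \<open>\<ell>(k) - \<ell>(k\<^sup>*) = r (k - k\<^sup>*)\<^sup>2 / (2 (k - a))\<close> and
  \<open>\<ell>'(k) = r (k - k\<^sup>*) (k + k\<^sup>* - 2a) / (2 (k - a)\<^sup>2)\<close>. By the chain rule
  \<open>\<nabla>\<L> = \<ell>'(k) (k\<^sub>2, k\<^sub>1)\<close>, so \<open>\<parallel>\<nabla>\<L>\<parallel>\<^sup>2 = \<ell>'(k)\<^sup>2 (\<parallel>k\<^sub>1\<parallel>\<^sup>2 + \<parallel>k\<^sub>2\<parallel>\<^sup>2)\<close>, and since
  \<open>k + k\<^sup>* - 2a \<ge> k - a\<close> the inequality reduces to \<open>m (k - a) \<le> \<parallel>k\<^sub>1\<parallel>\<^sup>2 + \<parallel>k\<^sub>2\<parallel>\<^sup>2\<close>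
  with \<open>m = min 1 (\<gamma> / (\<gamma> - 4a))\<close>.
  As \<open>2|k| \<le> \<parallel>k\<^sub>1\<parallel>\<^sup>2 + \<parallel>k\<^sub>2\<parallel>\<^sup>2\<close>, this is immediate unless \<open>a < k < -a\<close>; there the hypothesis
  \<open>\<parallel>k\<^sub>1 + k\<^sub>2\<parallel>\<^sup>2 \<ge> \<gamma>\<close> forces \<open>\<parallel>k\<^sub>1\<parallel>\<^sup>2 + \<parallel>k\<^sub>2\<parallel>\<^sup>2 \<ge> \<gamma>/2\<close>, and \<open>m (\<gamma> - 4a) \<le> \<gamma>\<close> closes the gap.\<close>

lemma grad_eqI:
  fixes f :: "'a::real_inner \<Rightarrow> real"
  assumes "(f has_derivative (\<lambda>h. g \<bullet> h)) (at x)"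
  shows "grad f x = g"
  unfolding grad_def
proof (rule the_equality)
  fix g' assume "(f has_derivative (\<lambda>h. g' \<bullet> h)) (at x)"
  then have "(\<lambda>h. g' \<bullet> h) = (\<lambda>h. g \<bullet> h)"
    using assms by (rule has_derivative_unique)
  then have "(g' - g) \<bullet> (g' - g) = 0"
    by (metis inner_diff_left right_minus_eq)
  then show "g' = g" by simp
qed (use assms in simp)

lemma has_derivative_inner_pair:
  fixes x y :: "'a::real_inner"
  assumes "(g has_real_derivative D) (at (y \<bullet> x))"
  shows "((\<lambda>(x, y). g (y \<bullet> x)) has_derivative (\<lambda>h. (D *\<^sub>R (y, x)) \<bullet> h)) (at (x, y))"
proof -
  have inner: "((\<lambda>z. snd z \<bullet> fst z) has_derivative (\<lambda>h. snd h \<bullet> x + y \<bullet> fst h)) (at (x, y))"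
    by (auto intro!: derivative_eq_intros)
  have "(g has_derivative (*) D) (at ((\<lambda>z. snd z \<bullet> fst z) (x, y)))"
    using assms by (simp add: has_field_derivative_def)
  from has_derivative_compose[OF inner this]
  have "((\<lambda>z. g (snd z \<bullet> fst z)) has_derivative (\<lambda>h. D * (snd h \<bullet> x + y \<bullet> fst h))) (at (x, y))"
    by simp
  moreover have "(\<lambda>h. D * (snd h \<bullet> x + y \<bullet> fst h)) = (\<lambda>h. (D *\<^sub>R (y, x)) \<bullet> h)"
    by (auto simp: fun_eq_iff algebra_simps inner_commute)
  ultimately show ?thesis
    by (simp add: case_prod_beta')
qed

definition lqr_scalar_cost :: "real \<Rightarrow> real \<Rightarrow> real \<Rightarrow> real \<Rightarrow> real" where
  "lqr_scalar_cost a q r k = (q + r * k\<^sup>2) / (2 * (k - a))"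

definition lqr_opt_gain :: "real \<Rightarrow> real \<Rightarrow> real \<Rightarrow> real" where
  "lqr_opt_gain a q r = a + sqrt (a\<^sup>2 + q / r)"

lemma lqr_cost_eq_scalar_cost:
  "lqr_cost a q r = (\<lambda>(k1, k2). lqr_scalar_cost a q r (k2 \<bullet> k1))"
proof -
  have flip: "- x / (2 * (a - k)) = x / (2 * (k - a))" for x k :: real
    by (metis minus_diff_eq minus_divide_divide mult_minus_right)
  show ?thesis
    by (simp only: lqr_cost_def lqr_scalar_cost_def flip)
qed

lemma lqr_opt_gain_gt:
  assumes "q > 0" "r > 0"
  shows "lqr_opt_gain a q r > a"
  using assms by (simp add: lqr_opt_gain_def add_nonneg_pos)

lemma lqr_opt_gain_riccati:
  assumes "q \<ge> 0" "r > 0"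
  shows "r * lqr_opt_gain a q r * (lqr_opt_gain a q r - 2 * a) = q"
proof -
  define d where "d = sqrt (a\<^sup>2 + q / r)"
  have "d\<^sup>2 = a\<^sup>2 + q / r"
    using assms by (simp add: d_def)
  then have "q = r * (d\<^sup>2 - a\<^sup>2)"
    using assms by simp
  moreover have "lqr_opt_gain a q r = a + d"
    by (simp add: lqr_opt_gain_def d_def)
  ultimately show ?thesis
    by (simp add: power2_eq_square algebra_simps)
qed

lemma lqr_scalar_cost_completed_square:
  assumes "q \<ge> 0" "r > 0" "k > a"
  shows "lqr_scalar_cost a q r k =
    r * lqr_opt_gain a q r + r * (k - lqr_opt_gain a q r)\<^sup>2 / (2 * (k - a))"
  using assms lqr_opt_gain_riccati[OF assms(1,2), of a, symmetric]
  by (simp add: lqr_scalar_cost_def field_simps power2_eq_square)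

lemma lqr_scalar_cost_has_real_derivative:
  assumes "q \<ge> 0" "r > 0" "k > a"
  shows "(lqr_scalar_cost a q r has_real_derivative
    r * (k - lqr_opt_gain a q r) * (k + lqr_opt_gain a q r - 2 * a) / (2 * (k - a)\<^sup>2)) (at k)"
proof -
  define k' where "k' = lqr_opt_gain a q r"
  have q: "q = r * k' * (k' - 2 * a)"
    using lqr_opt_gain_riccati[OF assms(1,2)] by (simp add: k'_def)
  have "(lqr_scalar_cost a q r has_real_derivative
      r * (k - k') * (k + k' - 2 * a) / (2 * (k - a)\<^sup>2)) (at k)"
    unfolding lqr_scalar_cost_def[abs_def] q using assms(3)
    by (auto intro!: derivative_eq_intros) (simp add: divide_simps power2_eq_square, algebra)
  then show ?thesis by (simp add: k'_def)
qed

lemma lqr_cost_has_derivative: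
  assumes "q \<ge> 0" "r > 0" "(k1, k2) \<in> stab_set a"
  shows "(lqr_cost a q r has_derivative
    (\<lambda>h. ((r * (k2 \<bullet> k1 - lqr_opt_gain a q r) * (k2 \<bullet> k1 + lqr_opt_gain a q r - 2 * a)
            / (2 * (k2 \<bullet> k1 - a)\<^sup>2)) *\<^sub>R (k2, k1)) \<bullet> h)) (at (k1, k2))"
  unfolding lqr_cost_eq_scalar_cost
  using assms by (intro has_derivative_inner_pair lqr_scalar_cost_has_real_derivative)
    (auto simp: stab_set_def)

lemma Inf_lqr_cost:
  assumes "q > 0" "r > 0"
  shows "Inf (lqr_cost a q r ` (stab_set a :: ((real^'n) \<times> (real^'n)) set)) = r * lqr_opt_gain a q r"
proof (rule cInf_eq_minimum)
  let ?k = "lqr_opt_gain a q r"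
  define e :: "real^'n" where "e = axis undefined 1"
  have "e \<bullet> e = 1" by (simp add: e_def inner_axis_axis)
  then have "(?k *\<^sub>R e, e) \<in> stab_set a" and "lqr_cost a q r (?k *\<^sub>R e, e) = r * ?k"
    using assms lqr_opt_gain_gt[OF assms]
    by (simp_all add: stab_set_def lqr_cost_eq_scalar_cost lqr_scalar_cost_completed_square)
  then show "r * ?k \<in> lqr_cost a q r ` (stab_set a :: ((real^'n) \<times> (real^'n)) set)"
    by (metis rev_image_eqI)
next
  fix y assume "y \<in> lqr_cost a q r ` (stab_set a :: ((real^'n) \<times> (real^'n)) set)"
  then obtain k1 k2 :: "real^'n" where "a < k2 \<bullet> k1" "y = lqr_scalar_cost a q r (k2 \<bullet> k1)"
    by (auto simp: stab_set_def lqr_cost_eq_scalar_cost)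
  then show "r * lqr_opt_gain a q r \<le> y"
    using assms by (simp add: lqr_scalar_cost_completed_square)
qed

lemma stability_margin_le_sum_norms:
  fixes k1 k2 :: "'a::real_inner"
  assumes "a < k2 \<bullet> k1" and "\<gamma> \<le> (norm (k1 + k2))\<^sup>2"
    and "0 \<le> m" "m \<le> 1" "m * (\<gamma> - 4 * a) \<le> \<gamma>"
  shows "m * (k2 \<bullet> k1 - a) \<le> (norm k1)\<^sup>2 + (norm k2)\<^sup>2"
proof -
  define k where "k = k2 \<bullet> k1"
  define N where "N = (norm k1)\<^sup>2 + (norm k2)\<^sup>2"
  have "\<bar>k\<bar> \<le> norm k1 * norm k2"
    unfolding k_def using Cauchy_Schwarz_ineq2[of k2 k1] by (simp add: mult.commute)
  moreover have "2 * (norm k1 * norm k2) \<le> N"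
    using sum_squares_bound[of "norm k1" "norm k2"] by (simp add: N_def)
  ultimately have abs_k: "2 * \<bar>k\<bar> \<le> N" by linarith
  have norm_sum: "(norm (k1 + k2))\<^sup>2 = N + 2 * k"
    unfolding N_def k_def
    by (simp add: power2_norm_eq_inner inner_add_left inner_add_right inner_commute)
  show ?thesis
  proof (cases "k \<ge> - a")
    case True
    have "m * (k - a) \<le> k - a"
      using assms(1,3,4) by (intro mult_left_le_one_le) (simp_all add: k_def)
    then show ?thesis using True abs_k by (simp add: k_def N_def)
  next
    case False
    have "2 * (m * (k - a)) = m * (2 * (k - a))" by simp
    also have "\<dots> \<le> m * (- 4 * a)"
      using False assms(3) by (intro mult_left_mono) auto
    also have "\<dots> \<le> \<gamma> * (1 - m)"
      using assms(5) by (simp add: algebra_simps)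
    also have "\<dots> \<le> (2 * N) * (1 - m)"
      using assms(2,4) abs_k norm_sum by (intro mult_right_mono) auto
    also have "\<dots> \<le> 2 * N"
      using assms(3) abs_k by (simp add: algebra_simps)
    finally show ?thesis by (simp add: k_def N_def)
  qed
qed

lemma lqr_gradient_dominance:
  fixes k1 k2 :: "real^'n"
  assumes "q > 0" "r > 0" "(k1, k2) \<in> stab_set a"
    and "0 \<le> m" "m * (k2 \<bullet> k1 - a) \<le> (norm k1)\<^sup>2 + (norm k2)\<^sup>2"
  shows "r / 4 * m * (lqr_cost a q r (k1, k2) - Inf (lqr_cost a q r ` stab_set a))
    \<le> (norm (grad (lqr_cost a q r) (k1, k2)))\<^sup>2"
proof -
  define k k' N where "k = k2 \<bullet> k1" and "k' = lqr_opt_gain a q r"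
    and "N = (norm k1)\<^sup>2 + (norm k2)\<^sup>2"
  define s where "s = k - a"
  define F where "F = r * (k - k') / (2 * s\<^sup>2)"
  have s: "s > 0" using assms(3) by (simp add: stab_set_def s_def k_def)
  have "k' > a" using lqr_opt_gain_gt[OF assms(1,2)] by (simp add: k'_def)
  then have "s\<^sup>2 \<le> (k + k' - 2 * a)\<^sup>2"
    using s by (intro power_mono) (simp_all add: s_def)
  then have "s\<^sup>2 / 2 \<le> (k + k' - 2 * a)\<^sup>2"
    using zero_le_power2[of s] by linarith
  then have weight: "(m * s) * (s\<^sup>2 / 2) \<le> N * (k + k' - 2 * a)\<^sup>2"
    using assms(4,5) by (intro mult_mono) (simp_all add: N_def s_def k_def)
  have grad: "grad (lqr_cost a q r) (k1, k2) = (F * (k + k' - 2 * a)) *\<^sub>R (k2, k1)"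
    using grad_eqI[OF lqr_cost_has_derivative[OF less_imp_le[OF assms(1)] assms(2,3)]]
    by (simp add: F_def k_def k'_def s_def)
  have "norm (grad (lqr_cost a q r) (k1, k2)) = \<bar>F * (k + k' - 2 * a)\<bar> * sqrt N"
    unfolding grad norm_scaleR norm_Pair N_def by (simp add: add.commute)
  then have norm_grad:
    "(norm (grad (lqr_cost a q r) (k1, k2)))\<^sup>2 = F\<^sup>2 * (N * (k + k' - 2 * a)\<^sup>2)"
    by (simp add: N_def power_mult_distrib)
  have excess: "lqr_cost a q r (k1, k2) - Inf (lqr_cost a q r ` stab_set a)
      = r * (k - k')\<^sup>2 / (2 * s)"
    unfolding Inf_lqr_cost[OF assms(1,2)] using assms(1,2) s
    by (simp add: lqr_cost_eq_scalar_cost lqr_scalar_cost_completed_square k_def k'_def s_def)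
  have "r / 4 * m * (r * (k - k')\<^sup>2 / (2 * s)) = F\<^sup>2 * ((m * s) * (s\<^sup>2 / 2))"
    using s by (simp add: F_def field_simps power2_eq_square)
  also have "\<dots> \<le> F\<^sup>2 * (N * (k + k' - 2 * a)\<^sup>2)"
    using weight by (rule mult_left_mono) simp
  finally show ?thesis
    unfolding excess norm_grad .
qed

theorem corollary1:
  fixes a q r \<gamma> :: real
  assumes "q > 0" and "r > 0" and "\<gamma> > max 0 (4 * a)"
  shows "r / 4 * min 1 (sqrt (\<gamma>\<^sup>2 / (\<gamma> - 4 * a)\<^sup>2)) > 0 \<and>
    (\<forall>(k1::real^'n) k2. (k1, k2) \<in> stab_set a \<and> (norm (k1 + k2))\<^sup>2 \<ge> \<gamma> \<longrightarrow>
       lqr_cost a q r differentiable (at (k1, k2)) \<and>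
       norm (grad (lqr_cost a q r) (k1, k2)) \<ge>
         sqrt (r / 4 * min 1 (sqrt (\<gamma>\<^sup>2 / (\<gamma> - 4 * a)\<^sup>2)) *
               (lqr_cost a q r (k1, k2) - Inf (lqr_cost a q r ` stab_set a))))"
proof -
  define m where "m = min 1 (sqrt (\<gamma>\<^sup>2 / (\<gamma> - 4 * a)\<^sup>2))"
  have "sqrt (\<gamma>\<^sup>2 / (\<gamma> - 4 * a)\<^sup>2) = \<gamma> / (\<gamma> - 4 * a)"
    using assms(3) by (simp add: real_sqrt_divide)
  then have m: "0 < m" "m \<le> 1" "m * (\<gamma> - 4 * a) \<le> \<gamma>"
    using assms(3) by (auto simp: m_def min_def field_simps)
  have "lqr_cost a q r differentiable (at (k1, k2)) \<and>
      sqrt (r / 4 * m * (lqr_cost a q r (k1, k2) - Inf (lqr_cost a q r ` stab_set a)))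
        \<le> norm (grad (lqr_cost a q r) (k1, k2))"
    if "(k1, k2) \<in> stab_set a" "(norm (k1 + k2))\<^sup>2 \<ge> \<gamma>" for k1 k2 :: "real^'n"
  proof
    show "lqr_cost a q r differentiable (at (k1, k2))"
      using lqr_cost_has_derivative[OF less_imp_le[OF assms(1)] assms(2) that(1)]
      by (auto simp: differentiable_def)
    have "a < k2 \<bullet> k1" using that(1) by (simp add: stab_set_def)
    from stability_margin_le_sum_norms[OF this that(2) less_imp_le[OF m(1)] m(2,3)]
    have "r / 4 * m * (lqr_cost a q r (k1, k2) - Inf (lqr_cost a q r ` stab_set a))
        \<le> (norm (grad (lqr_cost a q r) (k1, k2)))\<^sup>2"
      by (rule lqr_gradient_dominance[OF assms(1,2) that(1) less_imp_le[OF m(1)]])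
    from real_sqrt_le_mono[OF this]
    show "sqrt (r / 4 * m * (lqr_cost a q r (k1, k2) - Inf (lqr_cost a q r ` stab_set a)))
        \<le> norm (grad (lqr_cost a q r) (k1, k2))"
      by simp
  qed
  then show ?thesis using m(1) assms(2) by (auto simp: m_def)
qed

end
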